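(* Let $S_{r,N}$ be an atomic exponential Puiseux semiring. Then for every positive integer $k$, the set $\mathcal{U}_k(S_{r,N})$ is an arithmetic sequence with difference $|\mathsf{n}(r)-\mathsf{d}(r)|$ (i.e., a set of consecutive terms of an arithmetic progression with that common difference).
   Context: $\mathbb{N}=\{0,1,2,\dots\}$. A numerical monoid $N$ is an additive submonoid of $\mathbb{N}$ with finite complement in $\mathbb{N}$. For $r\in\mathbb{Q}_{>0}$ write $r=\mathsf{n}(r)/\mathsf{d}(r)$ in lowest terms. The exponential Puiseux semiring $S_{r,N}$ is the additive submonoid of $\mathbb{Q}_{\ge0}$ generated by $\{r^k:k\in N\}$; if $r\in\mathbb{N}$ it equals $\mathbb{N}$; if $r\notin\mathbb{N}$ it is atomic iff $\mathsf{n}(r)>1$, with atoms $r^s$, $s\in N$. For an atomic monoid $M$ and a positive integer $k$, $\mathcal{U}_k(M)$ is the set of positive integers $m$ for which there exist atoms $a_1,\dots,a_k,a'_1,\dots,a'_m$ with $a_1+\cdots+a_k=a'_1+\cdots+a'_m$. *)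

theory Defs
  imports Complex_Main
begin

definition numerical_monoid :: "nat set \<Rightarrow> bool" where
  "numerical_monoid N \<longleftrightarrow> 0 \<in> N \<and> (\<forall>a\<in>N. \<forall>b\<in>N. a + b \<in> N) \<and> finite (UNIV - N)"

definition numer :: "rat \<Rightarrow> int" where "numer r = fst (quotient_of r)"
definition denom :: "rat \<Rightarrow> int" where "denom r = snd (quotient_of r)"

inductive_set exp_puiseux :: "rat \<Rightarrow> nat set \<Rightarrow> rat set" for r N where
  zero: "0 \<in> exp_puiseux r N"
| gen: "k \<in> N \<Longrightarrow> r ^ k \<in> exp_puiseux r N"
| add: "x \<in> exp_puiseux r N \<Longrightarrow> y \<in> exp_puiseux r N \<Longrightarrow> x + y \<in> exp_puiseux r N"

definition atoms :: "rat set \<Rightarrow> rat set" where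
  "atoms M = {a \<in> M. a \<noteq> 0 \<and> (\<forall>x\<in>M. \<forall>y\<in>M. a = x + y \<longrightarrow> x = 0 \<or> y = 0)}"

definition atomic :: "rat set \<Rightarrow> bool" where
  "atomic M \<longleftrightarrow> (\<forall>x\<in>M. x \<noteq> 0 \<longrightarrow> (\<exists>as. set as \<subseteq> atoms M \<and> sum_list as = x))"

definition U_set :: "rat set \<Rightarrow> nat \<Rightarrow> nat set" where
  "U_set M k = {m. m > 0 \<and> (\<exists>as bs. length as = k \<and> length bs = m \<and>
      set as \<subseteq> atoms M \<and> set bs \<subseteq> atoms M \<and> sum_list as = sum_list bs)}"

text \<open>A set of consecutive terms (finitely or infinitely many) of an arithmetic progression
  with common difference d.\<close>
definition arith_seq :: "nat \<Rightarrow> nat set \<Rightarrow> bool" where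
  "arith_seq d A \<longleftrightarrow> (\<exists>a I. (\<forall>i j l. i \<in> I \<longrightarrow> l \<in> I \<longrightarrow> i \<le> j \<longrightarrow> j \<le> l \<longrightarrow> j \<in> I)
      \<and> A = {a + d * i | i. i \<in> I})"

end

theory Submission
  imports Defs "HOL-Number_Theory.Cong"
begin

text \<open>
  Write \<open>r = n / d\<close> in lowest terms. For \<open>d = 1\<close> every atom equals 1, so \<open>U\<^sub>k = {k}\<close>;
  for \<open>n = 1\<close> there are no atoms at all, contradicting atomicity. For \<open>n, d \<ge> 2\<close> the atoms
  are exactly the generators \<open>r ^ s\<close> with \<open>s \<in> N\<close>, so factorizations are lists of exponents.
  Clearing denominators in an equation between two sums of powers of \<open>r\<close> gives two facts.
  Each \<open>n ^ x * d ^ (A - x)\<close> is congruent to \<open>d ^ A\<close> modulo \<open>n - d\<close>, so the lengths of two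
  factorizations of one element agree modulo \<open>\<bar>n - d\<bar>\<close>. Modulo \<open>min n d\<close> only the terms with
  extremal exponent survive, so an element with a factorization of fewer than \<open>min n d\<close> atoms
  has no other factorization length. Conversely the exchange \<open>n * r ^ S = d * r ^ (S + 1)\<close>,
  performed above the conductor of \<open>N\<close>, lengthens a factorization of at least \<open>min n d\<close>
  atoms by \<open>\<bar>n - d\<bar>\<close> as often as desired. Hence \<open>U\<^sub>k = {k}\<close> for \<open>k < min n d\<close>, and otherwise
  \<open>U\<^sub>k\<close> consists of all \<open>m \<ge> min n d\<close> congruent to \<open>k\<close> modulo \<open>\<bar>n - d\<bar>\<close>.
\<close>

section \<open>Sums of powers of a fraction\<close>

lemma sum_list_power_fraction_mult:
  fixes p q :: nat
  assumes "q \<noteq> 0" and "\<forall>x\<in>set xs. x \<le> A"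
  shows "(\<Sum>x\<leftarrow>xs. (of_nat p / of_nat q :: rat) ^ x) * of_nat q ^ A
           = of_nat (\<Sum>x\<leftarrow>xs. p ^ x * q ^ (A - x))"
proof -
  have "(of_nat p / of_nat q :: rat) ^ x * of_nat q ^ A = of_nat (p ^ x * q ^ (A - x))"
    if "x \<le> A" for x
  proof -
    have "(of_nat q :: rat) ^ A = of_nat q ^ x * of_nat q ^ (A - x)"
      using that by (simp flip: power_add)
    then show ?thesis using assms(1) by (simp add: power_divide)
  qed
  then show ?thesis
    using assms(2) by (simp flip: sum_list_mult_const sum_list_of_nat cong: map_cong)
qed

lemma power_numerators_cong_top:
  fixes p q :: nat
  assumes "\<forall>x\<in>set xs. x \<le> A"
  shows "[(\<Sum>x\<leftarrow>xs. p ^ x * q ^ (A - x)) = count_list xs A * p ^ A] (mod q)"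
  using assms
proof (induction xs)
  case Nil
  then show ?case by simp
next
  case (Cons x xs)
  have "[p ^ x * q ^ (A - x) = (if x = A then p ^ A else 0)] (mod q)"
  proof (cases "x = A")
    case False
    with Cons.prems have "q dvd q ^ (A - x)" by simp
    with False show ?thesis by (simp add: cong_0_iff)
  qed simp
  with Cons show ?case by (auto dest: cong_add simp: add.commute)
qed

lemma power_numerators_cong_diff:
  fixes p q :: nat
  assumes "\<forall>x\<in>set xs. x \<le> A"
  shows "[int (\<Sum>x\<leftarrow>xs. p ^ x * q ^ (A - x)) = int (length xs) * int q ^ A] (mod (int p - int q))"
  using assms
proof (induction xs)
  case Nil
  then show ?case by simp
next
  case (Cons x xs)
  have "[int p = int q] (mod (int p - int q))"
    by (simp add: cong_iff_dvd_diff)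
  then have "[int p ^ x * int q ^ (A - x) = int q ^ x * int q ^ (A - x)] (mod (int p - int q))"
    by (intro cong_mult cong_pow cong_refl)
  also have "int q ^ x * int q ^ (A - x) = int q ^ A"
    using Cons.prems by (simp flip: power_add)
  finally show ?case
    using Cons by (auto dest: cong_add simp: algebra_simps)
qed

lemma count_list_mult_le_sum_list:
  fixes f :: "'a \<Rightarrow> 'b::linordered_semidom"
  assumes "\<And>y. 0 \<le> f y"
  shows "of_nat (count_list ys a) * f a \<le> (\<Sum>y\<leftarrow>ys. f y)"
  by (induction ys) (auto simp: assms distrib_right intro: add_mono add_increasing)

lemma sum_list_power_reflect:
  fixes \<rho> :: "'a::field"
  assumes "\<rho> \<noteq> 0" and "\<forall>x\<in>set xs. x \<le> B"
  shows "(\<Sum>x\<leftarrow>xs. \<rho> ^ x) = \<rho> ^ B * (\<Sum>x\<leftarrow>map (\<lambda>x. B - x) xs. inverse \<rho> ^ x)"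
proof -
  have "\<rho> ^ B * inverse \<rho> ^ (B - x) = \<rho> ^ x" if "x \<le> B" for x
  proof -
    have "\<rho> ^ B = \<rho> ^ x * \<rho> ^ (B - x)"
      using that by (simp flip: power_add)
    then have "\<rho> ^ B * inverse \<rho> ^ (B - x) = \<rho> ^ x * (\<rho> ^ (B - x) * inverse (\<rho> ^ (B - x)))"
      by (simp only: power_inverse mult.assoc)
    then show ?thesis
      using assms(1) by simp
  qed
  then have "(\<Sum>x\<leftarrow>xs. \<rho> ^ x) = (\<Sum>x\<leftarrow>xs. \<rho> ^ B * inverse \<rho> ^ (B - x))"
    using assms(2) by (intro arg_cong[where f = sum_list] map_cong) auto
  then show ?thesis
    by (simp add: sum_list_const_mult o_def)
qed

lemma power_sum_top_counts_eq:
  fixes p q :: nat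
  defines "\<rho> \<equiv> of_nat p / of_nat q :: rat"
  assumes "q < p" and "coprime p q" and "length xs < q"
    and bounded: "\<forall>x\<in>set (xs @ ys). x \<le> A"
    and sums: "(\<Sum>x\<leftarrow>xs. \<rho> ^ x) = (\<Sum>y\<leftarrow>ys. \<rho> ^ y)"
  shows "count_list xs A = count_list ys A"
proof -
  have "q > 0"
    using assms(4) by simp
  then have "\<rho> \<ge> 1"
    using assms(2) by (simp add: \<rho>_def)
  have "of_nat (count_list ys A) * \<rho> ^ A \<le> (\<Sum>y\<leftarrow>ys. \<rho> ^ y)"
    using \<open>\<rho> \<ge> 1\<close> by (intro count_list_mult_le_sum_list) simp
  also have "\<dots> \<le> (\<Sum>x\<leftarrow>xs. \<rho> ^ A)"
    unfolding sums[symmetric] using bounded \<open>\<rho> \<ge> 1\<close>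
    by (intro sum_list_mono power_increasing) auto
  also have "\<dots> = of_nat (length xs) * \<rho> ^ A"
    by (simp add: sum_list_triv)
  finally have "count_list ys A \<le> length xs"
    using \<open>\<rho> \<ge> 1\<close> by (simp add: mult_le_cancel_right)
  then have "count_list ys A < q" and "count_list xs A < q"
    using assms(4) count_le_length[of xs A] by linarith+
  moreover have "[count_list xs A * p ^ A = count_list ys A * p ^ A] (mod q)"
  proof -
    have bounded_xs: "\<forall>x\<in>set xs. x \<le> A" and bounded_ys: "\<forall>x\<in>set ys. x \<le> A"
      using bounded by simp_all
    have "(\<Sum>x\<leftarrow>xs. p ^ x * q ^ (A - x)) = (\<Sum>y\<leftarrow>ys. p ^ y * q ^ (A - y))"
      using sums sum_list_power_fraction_mult[OF _ bounded_xs, of q p]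
        sum_list_power_fraction_mult[OF _ bounded_ys, of q p] \<open>q > 0\<close>
      unfolding \<rho>_def by (metis of_nat_eq_iff not_less0 gr_implies_not0)
    then show ?thesis
      using power_numerators_cong_top[OF bounded_xs, of p q]
        power_numerators_cong_top[OF bounded_ys, of p q] by (metis cong_sym cong_trans)
  qed
  then have "[count_list xs A = count_list ys A] (mod q)"
    using assms(3) by (simp add: cong_mult_rcancel_nat coprime_commute)
  ultimately show ?thesis
    using cong_less_modulus_unique_nat by blast
qed

lemma power_sum_length_eq:
  fixes p q :: nat
  defines "\<rho> \<equiv> of_nat p / of_nat q :: rat"
  assumes "q < p" and "coprime p q" and "length xs < q"
    and "(\<Sum>x\<leftarrow>xs. \<rho> ^ x) = (\<Sum>y\<leftarrow>ys. \<rho> ^ y)"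
  shows "length ys = length xs"
  using assms(4,5)
proof (induction "length xs" arbitrary: xs ys rule: less_induct)
  case less
  show ?case
  proof (cases "xs @ ys = []")
    case False
    define A where "A = Max (set (xs @ ys))"
    have bounded: "\<forall>x\<in>set (xs @ ys). x \<le> A" and "A \<in> set (xs @ ys)"
      using False by (simp_all add: A_def del: set_append)
    have "count_list xs A = count_list ys A"
      using power_sum_top_counts_eq assms(2,3) less.prems bounded unfolding \<rho>_def by blast
    with \<open>A \<in> set (xs @ ys)\<close> have "A \<in> set xs" and "A \<in> set ys"
      by (metis Un_iff count_list_0_iff set_append)+
    then have lengths: "length (remove1 A xs) = length xs - 1" "length (remove1 A ys) = length ys - 1"
      "0 < length xs" "0 < length ys"
      by (auto simp: length_remove1)
    then have shorter: "length (remove1 A xs) < length xs" and "length (remove1 A xs) < q"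
      using less.prems(1) by linarith+
    moreover have "(\<Sum>x\<leftarrow>remove1 A xs. \<rho> ^ x) = (\<Sum>y\<leftarrow>remove1 A ys. \<rho> ^ y)"
      using less.prems(2) \<open>A \<in> set xs\<close> \<open>A \<in> set ys\<close> by (simp add: sum_list_map_remove1)
    ultimately have "length (remove1 A ys) = length (remove1 A xs)"
      by (rule less.hyps)
    then show ?thesis
      using lengths by linarith
  qed simp
qed

lemma exchange_sum_representation:
  fixes g :: "nat \<Rightarrow> 'a::comm_semiring_1"
  assumes "a \<le> b" and "a \<le> k" and "\<forall>i<j. of_nat b * g (Suc i) = of_nat a * g i"
  shows "\<exists>js. length js = k + j * (b - a) \<and> set js \<subseteq> {..j} \<and> of_nat k * g 0 = (\<Sum>i\<leftarrow>js. g i)"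
  using assms(2,3)
proof (induction j arbitrary: g k)
  case 0
  show ?case
    by (intro exI[of _ "replicate k 0"]) (simp add: sum_list_replicate set_replicate_conv_if)
next
  case (Suc j)
  obtain js where "length js = b + j * (b - a)" "set js \<subseteq> {..j}"
    and b_copies: "of_nat b * g (Suc 0) = (\<Sum>i\<leftarrow>js. g (Suc i))"
    using Suc.IH[of b "g \<circ> Suc"] Suc.prems(2) assms(1) by auto
  have "of_nat k = of_nat (k - a) + (of_nat a :: 'a)"
    using Suc.prems(1) by (simp flip: of_nat_add)
  then have "of_nat k * g 0 = of_nat (k - a) * g 0 + of_nat b * g (Suc 0)"
    using Suc.prems(2) by (simp add: distrib_right)
  then have "of_nat k * g 0 = (\<Sum>i\<leftarrow>replicate (k - a) 0 @ map Suc js. g i)"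
    by (simp add: b_copies sum_list_replicate o_def)
  moreover have "length (replicate (k - a) 0 @ map Suc js) = k + Suc j * (b - a)"
    using \<open>length js = _\<close> Suc.prems(1) assms(1) by simp
  moreover have "set (replicate (k - a) 0 @ map Suc js) \<subseteq> {..Suc j}"
    using \<open>set js \<subseteq> {..j}\<close> by auto
  ultimately show ?case
    by blast
qed

section \<open>Exponential Puiseux semirings\<close>

lemma numerical_monoid_conductor:
  assumes "numerical_monoid N"
  obtains c where "c > 0" and "\<And>t. c \<le> t \<Longrightarrow> t \<in> N"
proof -
  have "finite (UNIV - N)"
    using assms unfolding numerical_monoid_def by blast
  then obtain b where "\<forall>t\<in>UNIV - N. t \<le> b"
    using finite_nat_set_iff_bounded_le by blast
  then show ?thesis
    by (intro that[of "Suc b"]) force+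
qed

lemma exp_puiseux_iff:
  "x \<in> exp_puiseux r N \<longleftrightarrow> (\<exists>ss. set ss \<subseteq> N \<and> x = (\<Sum>s\<leftarrow>ss. r ^ s))"
proof
  assume "x \<in> exp_puiseux r N"
  then show "\<exists>ss. set ss \<subseteq> N \<and> x = (\<Sum>s\<leftarrow>ss. r ^ s)"
  proof (induction rule: exp_puiseux.induct)
    case zero
    show ?case by (intro exI[of _ "[]"]) simp
  next
    case (gen k)
    then show ?case by (intro exI[of _ "[k]"]) simp
  next
    case (add x y)
    then obtain xs ys where "set xs \<subseteq> N" "x = (\<Sum>s\<leftarrow>xs. r ^ s)" "set ys \<subseteq> N" "y = (\<Sum>s\<leftarrow>ys. r ^ s)"
      by blast
    then show ?case by (intro exI[of _ "xs @ ys"]) simp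
  qed
next
  assume "\<exists>ss. set ss \<subseteq> N \<and> x = (\<Sum>s\<leftarrow>ss. r ^ s)"
  then obtain ss where "set ss \<subseteq> N" "x = (\<Sum>s\<leftarrow>ss. r ^ s)"
    by blast
  then show "x \<in> exp_puiseux r N"
    by (induction ss arbitrary: x) (auto intro: exp_puiseux.intros)
qed

lemma exp_puiseux_atom_length_one:
  assumes "r > 0" and atom: "a \<in> atoms (exp_puiseux r N)"
    and "set ss \<subseteq> N" and a_eq: "a = (\<Sum>s\<leftarrow>ss. r ^ s)"
  shows "length ss = 1"
proof -
  obtain s rest where ss: "ss = s # rest"
    using atom a_eq unfolding atoms_def by (cases ss) auto
  have "r ^ s \<in> exp_puiseux r N"
    using \<open>set ss \<subseteq> N\<close> ss by (simp add: exp_puiseux.gen)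
  moreover have "(\<Sum>t\<leftarrow>rest. r ^ t) \<in> exp_puiseux r N"
    using \<open>set ss \<subseteq> N\<close> ss by (auto simp: exp_puiseux_iff)
  moreover have "a = r ^ s + (\<Sum>t\<leftarrow>rest. r ^ t)"
    using a_eq ss by simp
  ultimately have "(\<Sum>t\<leftarrow>rest. r ^ t) = 0"
    using atom \<open>r > 0\<close> unfolding atoms_def by auto
  then have "rest = []"
    using \<open>r > 0\<close> sum_list_nonneg_eq_0_iff[of "map (\<lambda>t. r ^ t) rest"] by force
  then show ?thesis
    using ss by simp
qed

lemma atoms_exp_puiseux_subset:
  assumes "r > 0"
  shows "atoms (exp_puiseux r N) \<subseteq> (\<lambda>s. r ^ s) ` N"
proof
  fix a assume atom: "a \<in> atoms (exp_puiseux r N)"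
  then obtain ss where "set ss \<subseteq> N" "a = (\<Sum>s\<leftarrow>ss. r ^ s)"
    unfolding atoms_def exp_puiseux_iff by blast
  moreover from this have "length ss = 1"
    using exp_puiseux_atom_length_one[OF assms atom] by blast
  ultimately show "a \<in> (\<lambda>s. r ^ s) ` N"
    by (auto simp: length_Suc_conv)
qed

lemma atoms_exp_puiseux_unit_fraction:
  assumes "d \<ge> 2" and "numerical_monoid N"
  shows "atoms (exp_puiseux (1 / of_nat d) N) = {}"
proof (rule ccontr)
  let ?r = "1 / of_nat d :: rat"
  assume "atoms (exp_puiseux ?r N) \<noteq> {}"
  then obtain s a where atom: "a \<in> atoms (exp_puiseux ?r N)" and "s \<in> N" "a = ?r ^ s"
    using atoms_exp_puiseux_subset[of ?r N] assms(1) by fastforce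
  obtain c where "c > 0" and conductor: "\<And>t. c \<le> t \<Longrightarrow> t \<in> N"
    using numerical_monoid_conductor[OF assms(2)] by blast
  have "a = (\<Sum>t\<leftarrow>replicate (d ^ c) (s + c). ?r ^ t)"
    using \<open>a = ?r ^ s\<close> assms(1) by (simp add: sum_list_replicate power_add power_one_over)
  then have "length (replicate (d ^ c) (s + c)) = 1"
    using assms(1) conductor by (intro exp_puiseux_atom_length_one[OF _ atom]) auto
  moreover have "d ^ 1 \<le> d ^ c"
    using assms(1) \<open>c > 0\<close> by (intro power_increasing) auto
  ultimately show False
    using assms(1) by simp
qed

lemma U_set_exp_puiseux_of_nat_subset:
  assumes "n \<ge> 1" and "0 \<in> N"
  shows "U_set (exp_puiseux (of_nat n) N) k \<subseteq> {k}"
proof -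
  have atom_eq_1: "a = 1" if atom: "a \<in> atoms (exp_puiseux (of_nat n) N)" for a
  proof -
    obtain s where "a = of_nat n ^ s"
      using atoms_exp_puiseux_subset[of "of_nat n" N] assms(1) atom by fastforce
    then have "a = (\<Sum>t\<leftarrow>replicate (n ^ s) 0. (of_nat n :: rat) ^ t)"
      by (simp add: sum_list_replicate)
    then have "length (replicate (n ^ s) (0::nat)) = 1"
      using assms by (intro exp_puiseux_atom_length_one[OF _ atom]) auto
    then show ?thesis
      using \<open>a = of_nat n ^ s\<close> by auto
  qed
  show ?thesis
  proof
    fix m assume "m \<in> U_set (exp_puiseux (of_nat n) N) k"
    then obtain as bs where "length as = k" "length bs = m" and "sum_list as = sum_list bs"
      and "set as \<subseteq> atoms (exp_puiseux (of_nat n) N)" "set bs \<subseteq> atoms (exp_puiseux (of_nat n) N)"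
      unfolding U_set_def by blast
    moreover from this have "set as \<subseteq> {1}" "set bs \<subseteq> {1}"
      using atom_eq_1 by blast+
    moreover have "sum_list cs = of_nat (length cs)" if "set cs \<subseteq> {1::rat}" for cs
      using that by (induction cs) auto
    ultimately show "m \<in> {k}"
      by simp
  qed
qed

lemma U_set_sym:
  assumes "m \<in> U_set M k" and "k > 0"
  shows "k \<in> U_set M m"
proof -
  obtain as bs where "length as = k" "length bs = m" "set as \<subseteq> atoms M" "set bs \<subseteq> atoms M"
    "sum_list as = sum_list bs"
    using assms(1) unfolding U_set_def by blast
  then show ?thesis
    unfolding U_set_def using assms(2) by force
qed

lemma mem_U_set_iff:
  assumes "atoms M = f ` A"
  shows "m \<in> U_set M k \<longleftrightarrow> 0 < m \<and> (\<exists>xs ys. length xs = k \<and> length ys = m \<and>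
      set xs \<subseteq> A \<and> set ys \<subseteq> A \<and> (\<Sum>x\<leftarrow>xs. f x) = (\<Sum>y\<leftarrow>ys. f y))"
proof -
  have atom_lists: "set as \<subseteq> atoms M \<longleftrightarrow> (\<exists>xs. set xs \<subseteq> A \<and> as = map f xs)" for as
  proof -
    have "set as \<subseteq> atoms M \<longleftrightarrow> as \<in> map f ` lists A"
      unfolding assms lists_image[symmetric] by (simp add: lists_eq_set)
    then show ?thesis
      by (auto simp: lists_eq_set)
  qed
  show ?thesis
  proof
    assume "m \<in> U_set M k"
    then obtain as bs where "m > 0" "length as = k" "length bs = m" "sum_list as = sum_list bs"
      and "set as \<subseteq> atoms M" "set bs \<subseteq> atoms M"
      unfolding U_set_def by blast
    then show "0 < m \<and> (\<exists>xs ys. length xs = k \<and> length ys = m \<and>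
      set xs \<subseteq> A \<and> set ys \<subseteq> A \<and> (\<Sum>x\<leftarrow>xs. f x) = (\<Sum>y\<leftarrow>ys. f y))"
      unfolding atom_lists by auto
  next
    assume "0 < m \<and> (\<exists>xs ys. length xs = k \<and> length ys = m \<and>
      set xs \<subseteq> A \<and> set ys \<subseteq> A \<and> (\<Sum>x\<leftarrow>xs. f x) = (\<Sum>y\<leftarrow>ys. f y))"
    then obtain xs ys where "0 < m" "length xs = k" "length ys = m" "set xs \<subseteq> A" "set ys \<subseteq> A"
      and "(\<Sum>x\<leftarrow>xs. f x) = (\<Sum>y\<leftarrow>ys. f y)"
      by blast
    moreover from this have "set (map f xs) \<subseteq> atoms M" "set (map f ys) \<subseteq> atoms M"
      using atom_lists by blast+
    moreover have "length (map f xs) = k" "length (map f ys) = m"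
      by (simp_all add: \<open>length xs = k\<close> \<open>length ys = m\<close>)
    ultimately show "m \<in> U_set M k"
      unfolding U_set_def by blast
  qed
qed

lemma arith_seq_subset_singleton:
  assumes "A \<subseteq> {a}"
  shows "arith_seq d A"
proof -
  have "A = {a + d * i |i. i \<in> (if A = {} then {} else {0})}"
    using assms by auto
  then show ?thesis
    unfolding arith_seq_def by (intro exI[of _ a] exI[of _ "if A = {} then {} else {0::nat}"]) auto
qed

lemma arith_seq_cong_ge:
  "arith_seq d {m. t \<le> m \<and> [m = k] (mod d)}"
  unfolding arith_seq_def
proof (intro exI conjI allI impI)
  let ?a = "k mod d" and ?I = "{i. t \<le> k mod d + d * i}"
  show "j \<in> ?I" if "i \<in> ?I" and "i \<le> j" for i j
    using that by (auto intro: order.trans)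
  show "{m. t \<le> m \<and> [m = k] (mod d)} = {?a + d * i |i. i \<in> ?I}"
  proof (intro equalityI subsetI)
    fix m assume "m \<in> {m. t \<le> m \<and> [m = k] (mod d)}"
    then have "t \<le> m" and "m = ?a + d * (m div d)"
      using mod_mult_div_eq[of m d] by (auto simp: cong_def)
    then show "m \<in> {?a + d * i |i. i \<in> ?I}"
      by force
  qed (auto simp: cong_def)
qed

section \<open>Numerator and denominator at least two\<close>

context
  fixes n d :: nat and N :: "nat set"
  assumes two_le_n: "2 \<le> n" and two_le_d: "2 \<le> d" and coprime_n_d: "coprime n d"
    and numerical_N: "numerical_monoid N"
begin

abbreviation \<rho> :: rat where "\<rho> \<equiv> of_nat n / of_nat d"

abbreviation \<delta> :: nat where "\<delta> \<equiv> nat \<bar>int n - int d\<bar>"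

lemma n_neq_d: "n \<noteq> d"
  using coprime_n_d two_le_d by auto

lemma two_le_min: "2 \<le> min n d"
  using two_le_n two_le_d by simp

lemma exchange_identity: "of_nat n * \<rho> ^ e = of_nat d * \<rho> ^ Suc e"
  using two_le_d by simp

lemma power_sum_length_eq_if_short:
  assumes "length xs < min n d" and sums: "(\<Sum>x\<leftarrow>xs. \<rho> ^ x) = (\<Sum>y\<leftarrow>ys. \<rho> ^ y)"
  shows "length ys = length xs"
proof (cases "d < n")
  case True
  then show ?thesis
    using power_sum_length_eq[of d n xs ys] assms coprime_n_d by simp
next
  case False
  then have "n < d"
    using n_neq_d by simp
  define B where "B = sum_list (xs @ ys)"
  have bounded: "\<forall>x\<in>set xs. x \<le> B" "\<forall>y\<in>set ys. y \<le> B"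
    unfolding B_def by (auto intro: member_le_sum_list trans_le_add1 trans_le_add2)
  have "\<rho> \<noteq> 0"
    using two_le_n two_le_d by simp
  then have "\<rho> ^ B * (\<Sum>x\<leftarrow>map (\<lambda>x. B - x) xs. inverse \<rho> ^ x)
      = \<rho> ^ B * (\<Sum>y\<leftarrow>map (\<lambda>y. B - y) ys. inverse \<rho> ^ y)"
    using sums sum_list_power_reflect[OF _ bounded(1)] sum_list_power_reflect[OF _ bounded(2)]
    by metis
  then have "(\<Sum>x\<leftarrow>map (\<lambda>x. B - x) xs. inverse \<rho> ^ x) = (\<Sum>y\<leftarrow>map (\<lambda>y. B - y) ys. inverse \<rho> ^ y)"
    using \<open>\<rho> \<noteq> 0\<close> by (metis mult_left_cancel power_not_zero)
  then have "(\<Sum>x\<leftarrow>map (\<lambda>x. B - x) xs. (of_nat d / of_nat n :: rat) ^ x)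
      = (\<Sum>y\<leftarrow>map (\<lambda>y. B - y) ys. (of_nat d / of_nat n :: rat) ^ y)"
    by (simp only: inverse_divide)
  then have "length (map (\<lambda>y. B - y) ys) = length (map (\<lambda>x. B - x) xs)"
    using \<open>n < d\<close> assms(1) coprime_n_d
      power_sum_length_eq[of n d "map (\<lambda>x. B - x) xs" "map (\<lambda>y. B - y) ys"]
    by (simp add: coprime_commute)
  then show ?thesis
    by simp
qed

lemma power_sum_length_cong:
  assumes sums: "(\<Sum>x\<leftarrow>xs. \<rho> ^ x) = (\<Sum>y\<leftarrow>ys. \<rho> ^ y)"
  shows "[length xs = length ys] (mod \<delta>)"
proof -
  define B where "B = sum_list (xs @ ys)"
  have bounded: "\<forall>x\<in>set xs. x \<le> B" "\<forall>y\<in>set ys. y \<le> B"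
    unfolding B_def by (auto intro: member_le_sum_list trans_le_add1 trans_le_add2)
  have "(\<Sum>x\<leftarrow>xs. n ^ x * d ^ (B - x)) = (\<Sum>y\<leftarrow>ys. n ^ y * d ^ (B - y))"
    using sums sum_list_power_fraction_mult[OF _ bounded(1), of d n]
      sum_list_power_fraction_mult[OF _ bounded(2), of d n] two_le_d
    by (metis of_nat_eq_iff not_numeral_le_zero)
  then have "[int (length xs) * int d ^ B = int (length ys) * int d ^ B] (mod (int n - int d))"
    using cong_sym[OF power_numerators_cong_diff[OF bounded(1), of n d]]
      power_numerators_cong_diff[OF bounded(2), of n d]
    by (simp add: cong_def)
  moreover have "coprime (int d ^ B) (int n - int d)"
  proof -
    have "gcd (int n - int d) (int d) = 1"
      using coprime_n_d by (simp add: gcd_diff1 flip: coprime_iff_gcd_eq_1)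
    then show ?thesis
      by (simp add: coprime_commute flip: coprime_iff_gcd_eq_1)
  qed
  ultimately have "[int (length xs) = int (length ys)] (mod (int n - int d))"
    by (simp add: cong_mult_rcancel)
  then have "[int (length xs) = int (length ys)] (mod int \<delta>)"
    by simp
  then show ?thesis
    by (simp only: cong_int_iff)
qed

lemma atoms_exp_puiseux: "atoms (exp_puiseux \<rho> N) = (\<lambda>s. \<rho> ^ s) ` N"
proof
  show "atoms (exp_puiseux \<rho> N) \<subseteq> (\<lambda>s. \<rho> ^ s) ` N"
    using atoms_exp_puiseux_subset two_le_n two_le_d by simp
  show "(\<lambda>s. \<rho> ^ s) ` N \<subseteq> atoms (exp_puiseux \<rho> N)"
  proof (intro subsetI, elim imageE)
    fix a s assume "a = \<rho> ^ s" "s \<in> N"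
    have "x = 0 \<or> y = 0"
      if x_in: "x \<in> exp_puiseux \<rho> N" and y_in: "y \<in> exp_puiseux \<rho> N" and "a = x + y" for x y
    proof -
      obtain xs ys where "x = (\<Sum>t\<leftarrow>xs. \<rho> ^ t)" "y = (\<Sum>t\<leftarrow>ys. \<rho> ^ t)"
        using x_in y_in unfolding exp_puiseux_iff by blast
      then have "(\<Sum>t\<leftarrow>[s]. \<rho> ^ t) = (\<Sum>t\<leftarrow>xs @ ys. \<rho> ^ t)"
        using \<open>a = x + y\<close> \<open>a = \<rho> ^ s\<close> by simp
      then have "length (xs @ ys) = 1"
        using power_sum_length_eq_if_short[of "[s]" "xs @ ys"] two_le_n two_le_d by simp
      then show ?thesis
        using \<open>x = _\<close> \<open>y = _\<close> by (cases xs) auto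
    qed
    then show "a \<in> atoms (exp_puiseux \<rho> N)"
      unfolding atoms_def using \<open>a = \<rho> ^ s\<close> \<open>s \<in> N\<close> two_le_n two_le_d
      by (auto intro: exp_puiseux.gen)
  qed
qed

lemma U_set_eq_if_below_min:
  assumes "k < min n d" and "m \<in> U_set (exp_puiseux \<rho> N) k"
  shows "m = k"
  using assms power_sum_length_eq_if_short unfolding mem_U_set_iff[OF atoms_exp_puiseux] by blast

lemma U_set_mem_cong:
  assumes "m \<in> U_set (exp_puiseux \<rho> N) k"
  shows "[m = k] (mod \<delta>)"
  using assms power_sum_length_cong unfolding mem_U_set_iff[OF atoms_exp_puiseux] by (metis cong_sym)

lemma long_power_sum_representation:
  assumes "min n d \<le> k"
  obtains S ys where "S \<in> N" and "set ys \<subseteq> N" and "length ys = k + j * \<delta>"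
    and "of_nat k * \<rho> ^ S = (\<Sum>y\<leftarrow>ys. \<rho> ^ y)"
proof -
  obtain c where conductor: "\<And>t. c \<le> t \<Longrightarrow> t \<in> N"
    using numerical_monoid_conductor[OF numerical_N] by blast
  consider "d < n" | "n < d"
    using n_neq_d by linarith
  then show ?thesis
  proof cases
    case 1
    let ?S = "c + j"
    have "\<forall>i<j. of_nat n * \<rho> ^ (?S - Suc i) = of_nat d * \<rho> ^ (?S - i)"
    proof (intro allI impI)
      fix i assume "i < j"
      then have "?S - i = Suc (?S - Suc i)"
        by simp
      then show "of_nat n * \<rho> ^ (?S - Suc i) = of_nat d * \<rho> ^ (?S - i)"
        by (simp only: exchange_identity)
    qed
    then obtain js where "length js = k + j * (n - d)" "set js \<subseteq> {..j}"
      and "of_nat k * \<rho> ^ ?S = (\<Sum>i\<leftarrow>js. \<rho> ^ (?S - i))"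
      using exchange_sum_representation[of d n k j "\<lambda>i. \<rho> ^ (?S - i)"] 1 assms by auto
    then show ?thesis
      using 1 conductor by (intro that[of ?S "map (\<lambda>i. ?S - i) js"]) (auto simp: o_def)
  next
    case 2
    have "\<forall>i<j. of_nat d * \<rho> ^ (c + Suc i) = of_nat n * \<rho> ^ (c + i)"
      by (metis add_Suc_right exchange_identity)
    then obtain js where "length js = k + j * (d - n)"
      and "of_nat k * \<rho> ^ c = (\<Sum>i\<leftarrow>js. \<rho> ^ (c + i))"
      using exchange_sum_representation[of n d k j "\<lambda>i. \<rho> ^ (c + i)"] 2 assms by auto
    then show ?thesis
      using 2 conductor by (intro that[of c "map (\<lambda>i. c + i) js"]) (auto simp: o_def)
  qed
qed

lemma U_set_add_multiple:
  assumes "min n d \<le> k"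
  shows "k + j * \<delta> \<in> U_set (exp_puiseux \<rho> N) k"
proof -
  obtain S ys where "S \<in> N" "set ys \<subseteq> N" "length ys = k + j * \<delta>"
    and "(\<Sum>x\<leftarrow>replicate k S. \<rho> ^ x) = (\<Sum>y\<leftarrow>ys. \<rho> ^ y)"
    using long_power_sum_representation[OF assms] by (metis sum_list_replicate map_replicate)
  moreover have "0 < k + j * \<delta>"
    using assms two_le_min by linarith
  ultimately show ?thesis
    unfolding mem_U_set_iff[OF atoms_exp_puiseux]
    by (intro conjI exI[of _ "replicate k S"] exI[of _ ys]) auto
qed

lemma U_set_eq_if_ge_min:
  assumes "min n d \<le> k"
  shows "U_set (exp_puiseux \<rho> N) k = {m. min n d \<le> m \<and> [m = k] (mod \<delta>)}"
proof (intro equalityI subsetI CollectI conjI)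
  fix m assume m: "m \<in> U_set (exp_puiseux \<rho> N) k"
  then show "[m = k] (mod \<delta>)"
    by (rule U_set_mem_cong)
  show "min n d \<le> m"
  proof (rule ccontr)
    assume "\<not> min n d \<le> m"
    moreover have "0 < k"
      using assms two_le_min by linarith
    ultimately have "k = m"
      using U_set_eq_if_below_min U_set_sym[OF m] by (meson not_le)
    with \<open>\<not> min n d \<le> m\<close> assms show False
      by simp
  qed
next
  fix m assume "m \<in> {m. min n d \<le> m \<and> [m = k] (mod \<delta>)}"
  then have "min n d \<le> m" and "[m = k] (mod \<delta>)"
    by simp_all
  show "m \<in> U_set (exp_puiseux \<rho> N) k"
  proof (cases "k \<le> m")
    case True
    then obtain j where "m = j * \<delta> + k"
      using \<open>[m = k] (mod \<delta>)\<close> cong_le_nat by blast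
    then show ?thesis
      using U_set_add_multiple[OF assms, of j] by (simp add: add.commute)
  next
    case False
    then obtain j where "k = j * \<delta> + m"
      using \<open>[m = k] (mod \<delta>)\<close> cong_le_nat cong_sym by (metis nat_le_linear)
    then have "k \<in> U_set (exp_puiseux \<rho> N) m"
      using U_set_add_multiple[OF \<open>min n d \<le> m\<close>, of j] by (simp add: add.commute)
    moreover have "0 < m"
      using \<open>min n d \<le> m\<close> two_le_min by linarith
    ultimately show ?thesis
      by (rule U_set_sym)
  qed
qed

lemma arith_seq_U_set_exp_puiseux: "arith_seq \<delta> (U_set (exp_puiseux \<rho> N) k)"
proof (cases "k < min n d")
  case True
  then show ?thesis
    using U_set_eq_if_below_min by (intro arith_seq_subset_singleton[of _ k]) blast
next
  case False
  then have "U_set (exp_puiseux \<rho> N) k = {m. min n d \<le> m \<and> [m = k] (mod \<delta>)}"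
    by (intro U_set_eq_if_ge_min) linarith
  then show ?thesis
    by (simp only: arith_seq_cong_ge)
qed

end

lemma positive_rat_as_fraction:
  assumes "r > 0"
  obtains n d :: nat where "r = of_nat n / of_nat d" and "numer r = int n" and "denom r = int d"
    and "coprime n d" and "0 < n" and "0 < d"
proof -
  obtain p q where pq: "quotient_of r = (p, q)"
    by (cases "quotient_of r")
  have "0 < q" and "r = of_int p / of_int q" and "coprime p q"
    using quotient_of_denom_pos[OF pq] quotient_of_div[OF pq] quotient_of_coprime[OF pq] by simp_all
  moreover from this have "0 < p"
    using assms by (simp add: zero_less_divide_iff)
  moreover have "numer r = p" and "denom r = q"
    by (simp_all add: numer_def denom_def pq)
  ultimately show ?thesis
    by (intro that[of "nat p" "nat q"]) (simp_all flip: coprime_int_iff)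
qed

theorem mainTheorem4:
  fixes r :: rat and N :: "nat set" and k :: nat
  assumes "r > 0" and "numerical_monoid N" and "atomic (exp_puiseux r N)" and "k > 0"
  shows "arith_seq (nat \<bar>numer r - denom r\<bar>) (U_set (exp_puiseux r N) k)"
proof -
  obtain n d where r: "r = of_nat n / of_nat d" "numer r = int n" "denom r = int d"
    and "coprime n d" "0 < n" "0 < d"
    using positive_rat_as_fraction[OF assms(1)] by blast
  have "0 \<in> N"
    using assms(2) unfolding numerical_monoid_def by blast
  consider "d = 1" | "n = 1" "2 \<le> d" | "2 \<le> n" "2 \<le> d"
    using \<open>0 < n\<close> \<open>0 < d\<close> by linarith
  then show ?thesis
  proof cases
    case 1
    then have "U_set (exp_puiseux r N) k \<subseteq> {k}"
      using U_set_exp_puiseux_of_nat_subset[of n N k] r \<open>0 < n\<close> \<open>0 \<in> N\<close> by simp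
    then show ?thesis
      by (rule arith_seq_subset_singleton)
  next
    case 2
    then have "atoms (exp_puiseux r N) = {}"
      using atoms_exp_puiseux_unit_fraction[OF _ assms(2)] r by simp
    moreover have "1 \<in> exp_puiseux r N"
      using exp_puiseux.gen[OF \<open>0 \<in> N\<close>, of r] by simp
    ultimately show ?thesis
      using assms(3) unfolding atomic_def by fastforce
  next
    case 3
    then show ?thesis
      using arith_seq_U_set_exp_puiseux[OF 3 \<open>coprime n d\<close> assms(2)] r by simp
  qed
qed

end
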